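(* Let $l\ge1$, $n\ge 1$ and $d\ge n$ be integers and let $\mathcal A=\{a_1<\dots<a_l\}$ be a totally ordered alphabet. Then every word over $\mathcal A$ of length at least $$256\, l\,(nd)^{2\log_2(nd)+10}d^2$$ either contains a subword of the form $u^d$ for some nonempty word $u$, or is $n$-divisible.
   Context: Words are finite sequences of letters; a subword means a contiguous factor. Two words $u,v$ are called comparable if neither is a prefix of the other. For comparable $u,v$ write $u\succ v$ if at the first position where they differ the letter of $u$ is larger. A word $W$ is $n$-divisible if it contains a subword $u_1u_2\cdots u_n$ with nonempty $u_i$ and $u_1\succ u_2\succ\dots\succ u_n$. *)

theory Defs
  imports Complex_Main "HOL-Library.Sublist"
begin

definition comparable :: "'a list \<Rightarrow> 'a list \<Rightarrow> bool" where
  "comparable u v \<longleftrightarrow> \<not> prefix u v \<and> \<not> prefix v u"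

definition word_gt :: "'a::linorder list \<Rightarrow> 'a list \<Rightarrow> bool" where
  "word_gt u v \<longleftrightarrow> comparable u v \<and>
     (\<exists>p a b s t. u = p @ a # s \<and> v = p @ b # t \<and> b < a)"

definition n_divisible :: "nat \<Rightarrow> 'a::linorder list \<Rightarrow> bool" where
  "n_divisible n W \<longleftrightarrow> (\<exists>us. length us = n \<and> (\<forall>u\<in>set us. u \<noteq> []) \<and>
     (\<forall>i. Suc i < n \<longrightarrow> word_gt (us ! i) (us ! Suc i)) \<and> sublist (concat us) W)"

end

theory Submission
  imports Defs "HOL-Library.List_Lexorder"
begin

text \<open>
  Write \<open>F k\<close> for the set of length-\<open>k\<close> factors of \<open>W\<close>. If positions \<open>p\<^sub>1 < \<dots> < p\<^sub>n\<close>,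
  pairwise at distance at least \<open>G\<close>, carry strictly decreasing length-\<open>G\<close> factors, cutting
  \<open>W\<close> at them shows that \<open>W\<close> is \<open>n\<close>-divisible. So if \<open>W\<close> is not \<open>n\<close>-divisible, such chains
  are shorter than \<open>n\<close>, and by Mirsky's theorem the positions can be coloured with \<open>n - 1\<close>
  colours so that the factors, hence also their ranks in \<open>F G\<close>, weakly increase along each
  colour class. Applied to positions in one residue class mod \<open>G\<close> this gives
  \<open>|F (2G)| \<le> 2G(n-1)^2 |F G|\<close>, so \<open>|F G| \<le> l 4^(j^2)\<close> for \<open>G = 2^j \<ge> nd\<close>. Applied to the
  first \<open>n\<close> positions of \<open>M\<close> consecutive blocks of length \<open>G + n\<close>, where two equal factors in
  one block would create a \<open>d\<close>-th power, it makes (colour, rank + block index) injective, so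
  \<open>nM \<le> (n-1)(|F G| + M)\<close>, i.e. \<open>M \<le> (n-1)|F G|\<close>.
\<close>

lemma word_gtI:
  assumes "u = p @ a # s" "v = p @ b # t" "b < a"
  shows "word_gt u v"
proof -
  have "\<not> prefix u v" "\<not> prefix v u"
    using assms by (auto simp: prefix_def)
  then show ?thesis
    using assms unfolding word_gt_def comparable_def by blast
qed

lemma word_gt_prefix_mono:
  assumes "word_gt u v" "prefix u u'" "prefix v v'"
  shows "word_gt u' v'"
proof -
  obtain p a b s t where "u = p @ a # s" "v = p @ b # t" "b < a"
    using assms(1) unfolding word_gt_def by blast
  moreover obtain x y where "u' = u @ x" "v' = v @ y"
    using assms(2,3) by (auto simp: prefix_def)
  ultimately show ?thesis
    by (intro word_gtI[of _ p a "s @ x" _ b "t @ y"]) auto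
qed

lemma word_gt_if_less_same_length:
  fixes u v :: "'a::linorder list"
  assumes "length u = length v" "v < u"
  shows "word_gt u v"
proof -
  have "(v, u) \<in> lexord {(x, y). x < y}"
    using assms(2) by (simp add: list_less_def)
  then obtain a w where
    "u = v @ a # w \<or> (\<exists>p b a s t. b < a \<and> v = p @ b # s \<and> u = p @ a # t)"
    unfolding lexord_def by blast
  moreover have "u \<noteq> v @ a # w"
    using assms(1) by auto
  ultimately show ?thesis
    using word_gtI by blast
qed

lemma n_divisible_one: "W \<noteq> [] \<Longrightarrow> n_divisible 1 W"
  unfolding n_divisible_def by (intro exI[of _ "[W]"]) auto

definition factor_at :: "'a list \<Rightarrow> nat \<Rightarrow> nat \<Rightarrow> 'a list" where
  "factor_at W i k = take k (drop i W)"

definition factors :: "'a list \<Rightarrow> nat \<Rightarrow> 'a list set" where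
  "factors W k = (\<lambda>i. factor_at W i k) ` {i. i + k \<le> length W}"

lemma factor_at_add: "factor_at W i (k + k') = factor_at W i k @ factor_at W (i + k) k'"
  unfolding factor_at_def by (simp add: take_add add.commute)

lemma finite_factors: "finite (factors W k)"
  unfolding factors_def by (rule finite_imageI, rule finite_subset[of _ "{..length W}"]) auto

lemma factor_at_in_factors: "i + k \<le> length W \<Longrightarrow> factor_at W i k \<in> factors W k"
  unfolding factors_def by auto

lemma card_factors_one_le:
  assumes "set W \<subseteq> A" "finite A"
  shows "card (factors W 1) \<le> card A"
proof -
  have "factors W 1 \<subseteq> (\<lambda>a. [a]) ` A"
  proof
    fix v assume "v \<in> factors W 1"
    then obtain i where "i + 1 \<le> length W" "v = factor_at W i 1"
      unfolding factors_def by auto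
    moreover have "W ! i \<in> A"
      using assms(1) nth_mem[of i W] \<open>i + 1 \<le> length W\<close> by auto
    ultimately show "v \<in> (\<lambda>a. [a]) ` A"
      by (simp add: factor_at_def Cons_nth_drop_Suc[symmetric])
  qed
  then have "card (factors W 1) \<le> card ((\<lambda>a. [a]) ` A)"
    using assms(2) by (intro card_mono) auto
  also have "\<dots> \<le> card A"
    using assms(2) by (rule card_image_le)
  finally show ?thesis .
qed

lemma sublist_power_if_factor_at_shift_eq:
  assumes "0 < p" "i + p \<le> length W" "(d - 1) * p \<le> G"
    and "factor_at W i G = factor_at W (i + p) G"
  shows "\<exists>u. u \<noteq> [] \<and> sublist (concat (replicate d u)) W"
proof -
  define X where "X = drop i W"
  define u where "u = take p X"
  have shift: "take G X = take G (drop p X)"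
    using assms(4) unfolding factor_at_def X_def by (simp add: add.commute)
  have "take (k * p) X = concat (replicate k u)" if "k \<le> d" for k
    using that
  proof (induction k)
    case (Suc k)
    have "k * p \<le> (d - 1) * p"
      using Suc.prems by (intro mult_le_mono1) simp
    then have kp: "k * p \<le> G"
      using assms(3) by (rule order.trans)
    have "take (Suc k * p) X = u @ take (k * p) (drop p X)"
      unfolding u_def by (simp add: take_add)
    also have "take (k * p) (drop p X) = take (k * p) X"
      using shift kp by (metis min_absorb1 take_take)
    finally show ?case
      using Suc by simp
  qed simp
  moreover have "u \<noteq> []"
    unfolding u_def X_def using assms(1,2) by simp
  moreover have "sublist (take (d * p) X) W"
    unfolding X_def by (meson sublist_drop sublist_take sublist_order.order.trans)
  ultimately show ?thesis
    by auto
qed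

lemma decreasing_factors_split:
  fixes W :: "'a::linorder list"
  assumes "successively (\<lambda>i j. i + G \<le> j \<and> factor_at W j G < factor_at W i G) ps"
    and "ps \<noteq> []" "last ps + G \<le> length W" "G \<ge> 1"
  shows "\<exists>us. length us = length ps \<and> (\<forall>u\<in>set us. u \<noteq> []) \<and> successively word_gt us
     \<and> concat us = take (last ps + G - hd ps) (drop (hd ps) W)
     \<and> prefix (factor_at W (hd ps) G) (hd us) \<and> hd ps \<le> last ps"
  using assms
proof (induction ps rule: induct_list012)
  case (2 p)
  show ?case
    using "2.prems" by (intro exI[of _ "[factor_at W p G]"]) (auto simp: factor_at_def)
next
  case (3 p q rest)
  have pq: "p + G \<le> q" "factor_at W q G < factor_at W p G"
    and chain: "successively (\<lambda>i j. i + G \<le> j \<and> factor_at W j G < factor_at W i G) (q # rest)"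
    using "3.prems"(1) by auto
  obtain us where us: "length us = length (q # rest)" "\<forall>u\<in>set us. u \<noteq> []"
    "successively word_gt us" "concat us = take (last (q # rest) + G - q) (drop q W)"
    "prefix (factor_at W q G) (hd us)" "q \<le> last (q # rest)"
    using "3.IH"(2)[OF chain] "3.prems"(3,4) by auto
  define u where "u = take (q - p) (drop p W)"
  have "q \<le> length W"
    using us(6) "3.prems"(3) by simp
  then have "u \<noteq> []"
    using pq(1) "3.prems"(4) by (simp add: u_def)
  have "u = factor_at W p G @ take (q - p - G) (drop (p + G) W)"
    using pq(1) take_add[of G "q - p - G" "drop p W"] by (simp add: u_def factor_at_def add.commute)
  then have prefix_u: "prefix (factor_at W p G) u"
    by simp
  have "length (factor_at W p G) = length (factor_at W q G)"
    using pq(1) \<open>q \<le> length W\<close> us(6) "3.prems"(3) by (simp add: factor_at_def)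
  then have "word_gt (factor_at W p G) (factor_at W q G)"
    using pq(2) by (rule word_gt_if_less_same_length)
  then have "word_gt u (hd us)"
    using prefix_u us(5) by (rule word_gt_prefix_mono)
  moreover have "u @ concat us = take (last (q # rest) + G - p) (drop p W)"
    using pq(1) us(6) take_add[of "q - p" "last (q # rest) + G - q" "drop p W"]
    by (simp add: u_def us(4) add.commute)
  ultimately show ?case
    using us \<open>u \<noteq> []\<close> prefix_u pq(1)
    by (intro exI[of _ "u # us"]) (auto simp: successively_Cons neq_Nil_conv)
qed simp

lemma n_divisible_if_decreasing_factors:
  fixes W :: "'a::linorder list"
  assumes "successively (\<lambda>i j. i + G \<le> j \<and> factor_at W j G < factor_at W i G) ps"
    and "length ps = n" "n \<ge> 1" "last ps + G \<le> length W" "G \<ge> 1"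
  shows "n_divisible n W"
proof -
  have "ps \<noteq> []"
    using assms(2,3) by auto
  from decreasing_factors_split[OF assms(1) this assms(4,5)] assms(2)
  obtain us where us: "length us = n" "\<forall>u\<in>set us. u \<noteq> []" "successively word_gt us"
    "concat us = take (last ps + G - hd ps) (drop (hd ps) W)"
    by blast
  have "sublist (concat us) W"
    unfolding us(4) by (meson sublist_drop sublist_take sublist_order.order.trans)
  then show ?thesis
    unfolding n_divisible_def using us successively_nth[OF us(3)] by auto
qed

lemma decreasing_factor_chain_short:
  fixes W :: "'a::linorder list"
  assumes "\<not> n_divisible n W" "n \<ge> 2" "G \<ge> 1"
    and R: "\<And>i j. R i j \<Longrightarrow> i + G \<le> j \<and> j + G \<le> length W"
    and chain: "successively (\<lambda>i j. R i j \<and> factor_at W j G < factor_at W i G) ps"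
  shows "length ps < n"
proof (rule ccontr)
  assume "\<not> length ps < n"
  define qs where "qs = take n ps"
  have len: "length qs = n"
    using \<open>\<not> length ps < n\<close> by (simp add: qs_def)
  have "successively (\<lambda>i j. R i j \<and> factor_at W j G < factor_at W i G) (take n ps @ drop n ps)"
    using chain by simp
  then have qs_chain: "successively (\<lambda>i j. R i j \<and> factor_at W j G < factor_at W i G) qs"
    unfolding qs_def successively_append_iff by blast
  have "qs \<noteq> []" "Suc (n - 2) = length qs - 1"
    using len assms(2) by auto
  then have "R (qs ! (n - 2)) (last qs)"
    using successively_nth[OF qs_chain, of "n - 2"] len assms(2) by (simp add: last_conv_nth)
  then have "last qs + G \<le> length W"
    using R by blast
  moreover have "successively (\<lambda>i j. i + G \<le> j \<and> factor_at W j G < factor_at W i G) qs"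
    using qs_chain by (rule successively_mono) (use R in blast)
  ultimately have "n_divisible n W"
    using n_divisible_if_decreasing_factors[of G W qs n] len assms(2,3) by simp
  with assms(1) show False ..
qed

text \<open>Mirsky's theorem: colour each element by the length of the longest chain ending in it.\<close>

lemma height_function_if_chains_bounded:
  fixes Q :: "'b \<Rightarrow> 'b \<Rightarrow> bool"
  assumes bounded: "\<And>ps. successively Q ps \<Longrightarrow> length ps < n"
  obtains h where "\<And>i. h i \<in> {1..<n}" "\<And>i j. Q i j \<Longrightarrow> h i < h j"
proof -
  define S where "S i = {length ps | ps. successively Q ps \<and> ps \<noteq> [] \<and> last ps = i}" for i
  define h where "h i = Max (S i)" for i
  have fin: "finite (S i)" for i
    by (rule finite_subset[of _ "{..<n}"]) (auto simp: S_def dest: bounded)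
  have "1 \<in> S i" for i
    unfolding S_def by (rule CollectI, rule exI[of _ "[i]"]) simp
  then have h_in: "h i \<in> S i" and "1 \<le> h i" for i
    unfolding h_def using fin by (auto intro: Max_in Max_ge)
  moreover have "h i < n" for i
    using h_in[of i] unfolding S_def by (auto dest: bounded)
  moreover have "h i < h j" if "Q i j" for i j
  proof -
    obtain ps where ps: "successively Q ps" "ps \<noteq> []" "last ps = i" "length ps = h i"
      using h_in[of i] unfolding S_def by auto
    then have "successively Q (ps @ [j])"
      using that by (auto simp: successively_append_iff)
    then have "h i + 1 \<in> S j"
      unfolding S_def using ps by (intro CollectI exI[of _ "ps @ [j]"]) auto
    then have "h i + 1 \<le> h j"
      unfolding h_def using fin by (intro Max_ge) auto
    then show ?thesis
      by simp
  qed
  ultimately show ?thesis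
    by (intro that[of h]) auto
qed

lemma factor_colouring:
  fixes W :: "'a::linorder list"
  assumes "\<not> n_divisible n W" "n \<ge> 2" "G \<ge> 1"
    and "\<And>i j. R i j \<Longrightarrow> i + G \<le> j \<and> j + G \<le> length W"
  obtains h where "\<And>i. h i \<in> {1..<n}"
    "\<And>i j. R i j \<Longrightarrow> h i = h j \<Longrightarrow> factor_at W i G \<le> factor_at W j G"
proof -
  define Q where "Q i j \<longleftrightarrow> R i j \<and> factor_at W j G < factor_at W i G" for i j
  have "length ps < n" if "successively Q ps" for ps
    using assms that unfolding Q_def by (rule decreasing_factor_chain_short)
  then obtain h where "\<And>i. h i \<in> {1..<n}" "\<And>i j. Q i j \<Longrightarrow> h i < h j"
    using height_function_if_chains_bounded by blast
  then show ?thesis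
    using that unfolding Q_def by (metis less_irrefl not_le)
qed

definition rank_in :: "'a::linorder set \<Rightarrow> 'a \<Rightarrow> nat" where
  "rank_in F w = card {z \<in> F. z < w}"

lemma rank_in_mono: "finite F \<Longrightarrow> w \<le> w' \<Longrightarrow> rank_in F w \<le> rank_in F w'"
  unfolding rank_in_def by (rule card_mono) auto

lemma rank_in_strict_mono: "finite F \<Longrightarrow> w \<in> F \<Longrightarrow> w < w' \<Longrightarrow> rank_in F w < rank_in F w'"
  unfolding rank_in_def by (rule psubset_card_mono) auto

lemma rank_in_less_card: "finite F \<Longrightarrow> w \<in> F \<Longrightarrow> rank_in F w < card F"
  unfolding rank_in_def by (rule psubset_card_mono) auto

lemma rank_in_eq_imp_eq:
  assumes "finite F" "w \<in> F" "w \<le> w'" "rank_in F w = rank_in F w'"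
  shows "w = w'"
proof (rule ccontr)
  assume "w \<noteq> w'"
  with assms(3) have "w < w'"
    by simp
  with rank_in_strict_mono[OF assms(1,2) this] assms(4) show False
    by simp
qed

lemma rank_in_inj:
  assumes "finite F" "w \<in> F" "w' \<in> F" "rank_in F w = rank_in F w'"
  shows "w = w'"
proof (cases "w \<le> w'")
  case True
  then show ?thesis
    using rank_in_eq_imp_eq[OF assms(1,2) _ assms(4)] by simp
next
  case False
  then have "w' \<le> w"
    by (meson linorder_le_cases)
  then show ?thesis
    using rank_in_eq_imp_eq[OF assms(1,3) _ assms(4)[symmetric]] by simp
qed

lemma rank_in_add_eq:
  assumes "finite F" "w \<in> F" "v \<in> F" "w \<le> w'" "v \<le> v'"
    and "rank_in F w + rank_in F v = rank_in F w' + rank_in F v'"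
  shows "w = w' \<and> v = v'"
proof -
  have "rank_in F w \<le> rank_in F w'" "rank_in F v \<le> rank_in F v'"
    using rank_in_mono[OF assms(1)] assms(4,5) by auto
  then have "rank_in F w = rank_in F w'" "rank_in F v = rank_in F v'"
    using assms(6) by linarith+
  then show ?thesis
    using rank_in_eq_imp_eq[OF assms(1,2,4)] rank_in_eq_imp_eq[OF assms(1,3,5)] by simp
qed

lemma card_image_le_card_image:
  fixes I :: "'b::linorder set"
  assumes "finite I"
    and determined: "\<And>i i'. i \<in> I \<Longrightarrow> i' \<in> I \<Longrightarrow> \<phi> i = \<phi> i' \<Longrightarrow> i < i' \<Longrightarrow> g i = g i'"
  shows "card (g ` I) \<le> card (\<phi> ` I)"
proof (rule surj_card_le)
  have same: "g i = g i'" if "i \<in> I" "i' \<in> I" "\<phi> i = \<phi> i'" for i i'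
  proof (cases i i' rule: linorder_cases)
    case less
    then show ?thesis
      by (rule determined[OF that])
  next
    case greater
    then show ?thesis
      by (rule determined[OF that(2,1) that(3)[symmetric], symmetric])
  qed simp
  have "g i = g (inv_into I \<phi> (\<phi> i))" if "i \<in> I" for i
    using that by (intro same inv_into_into f_inv_into_f[symmetric] imageI)
  then show "g ` I \<subseteq> (\<lambda>y. g (inv_into I \<phi> y)) ` \<phi> ` I"
    by auto
qed (use assms(1) in simp)

lemma mod_eq_less_imp_add_le:
  fixes i j G :: nat
  assumes "i mod G = j mod G" "i < j"
  shows "i + G \<le> j"
proof -
  have "G dvd j - i"
    using mod_eq_dvd_iff_nat[OF less_imp_le[OF assms(2)], of G] assms(1) by simp
  then have "G \<le> j - i"
    using assms(2) by (intro dvd_imp_le) simp_all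
  then show ?thesis
    using assms(2) by linarith
qed

lemma factor_at_double_eq_if_rank_sums_eq:
  fixes W :: "'a::linorder list"
  assumes "i + 2 * G \<le> length W"
    and "factor_at W i G \<le> factor_at W i' G" "factor_at W (i + G) G \<le> factor_at W (i' + G) G"
    and "rank_in (factors W G) (factor_at W i G) + rank_in (factors W G) (factor_at W (i + G) G)
       = rank_in (factors W G) (factor_at W i' G) + rank_in (factors W G) (factor_at W (i' + G) G)"
  shows "factor_at W i (2 * G) = factor_at W i' (2 * G)"
proof -
  have "factor_at W i G \<in> factors W G" "factor_at W (i + G) G \<in> factors W G"
    using assms(1) by (auto intro!: factor_at_in_factors)
  then have "factor_at W i G = factor_at W i' G \<and> factor_at W (i + G) G = factor_at W (i' + G) G"
    using rank_in_add_eq[OF finite_factors _ _ assms(2-4)] by blast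
  then show ?thesis
    using factor_at_add[of W _ G G] by (simp add: mult_2)
qed

text \<open>A factor of length \<open>2G\<close> at position \<open>i\<close> is determined by \<open>i mod G\<close>, the colours of
  \<open>i\<close> and \<open>i + G\<close> for the relation "same residue mod \<open>G\<close>", and the sum of the ranks of
  its two halves: along a colour class both halves weakly increase, so equal rank sums
  force equal halves.\<close>

lemma card_factors_double_le:
  fixes W :: "'a::linorder list"
  assumes nd: "\<not> n_divisible n W" and n: "n \<ge> 2" and G: "G \<ge> 1"
  shows "card (factors W (2 * G)) \<le> G * (n - 1) * (n - 1) * (2 * card (factors W G))"
proof -
  define U where "U = card (factors W G)"
  define R where "R i j \<longleftrightarrow> i mod G = j mod G \<and> i < j \<and> j + G \<le> length W" for i j
  have "i + G \<le> j \<and> j + G \<le> length W" if "R i j" for i j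
    using that mod_eq_less_imp_add_le[where i = i and j = j] unfolding R_def by simp
  from this obtain h where h_range: "\<And>i. h i \<in> {1..<n}"
    and h_mono: "\<And>i j. R i j \<Longrightarrow> h i = h j \<Longrightarrow> factor_at W i G \<le> factor_at W j G"
    using factor_colouring[OF nd n G] by blast
  define I where "I = {i. i + 2 * G \<le> length W}"
  define rk where "rk i = rank_in (factors W G) (factor_at W i G)" for i
  define \<phi> where "\<phi> i = (i mod G, h i, h (i + G), rk i + rk (i + G))" for i
  have in_factors: "factor_at W i G \<in> factors W G" "factor_at W (i + G) G \<in> factors W G"
    if "i \<in> I" for i
    using that by (auto simp: I_def intro!: factor_at_in_factors)
  have determined: "factor_at W i (2 * G) = factor_at W i' (2 * G)"
    if "i \<in> I" "i' \<in> I" "\<phi> i = \<phi> i'" "i < i'" for i i'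
  proof -
    have eq: "i mod G = i' mod G" "h i = h i'" "h (i + G) = h (i' + G)"
      "rk i + rk (i + G) = rk i' + rk (i' + G)"
      using that(3) by (simp_all add: \<phi>_def)
    have "R i i'" "R (i + G) (i' + G)"
      using eq(1) that(2,4) by (simp_all add: R_def I_def mod_add_right_eq)
    moreover have "i + 2 * G \<le> length W"
      using that(1) by (simp add: I_def)
    ultimately show ?thesis
      using factor_at_double_eq_if_rank_sums_eq h_mono eq(2,3) eq(4)[unfolded rk_def] by blast
  qed
  have "finite I"
    unfolding I_def by (rule finite_subset[of _ "{..length W}"]) auto
  have "factors W (2 * G) = (\<lambda>i. factor_at W i (2 * G)) ` I"
    unfolding factors_def I_def ..
  also have "card \<dots> \<le> card (\<phi> ` I)"
    using \<open>finite I\<close> determined by (rule card_image_le_card_image)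
  also have "\<dots> \<le> card ({..<G} \<times> {1..<n} \<times> {1..<n} \<times> {..<2 * U})"
  proof (rule card_mono)
    have "\<phi> i \<in> {..<G} \<times> {1..<n} \<times> {1..<n} \<times> {..<2 * U}" if "i \<in> I" for i
    proof -
      have "rk i < U" "rk (i + G) < U"
        unfolding rk_def U_def using rank_in_less_card[OF finite_factors] in_factors[OF that] by auto
      then show ?thesis
        using h_range G by (simp add: \<phi>_def)
    qed
    then show "\<phi> ` I \<subseteq> {..<G} \<times> {1..<n} \<times> {1..<n} \<times> {..<2 * U}"
      by blast
  qed simp
  also have "\<dots> = G * (n - 1) * (n - 1) * (2 * U)"
    by (simp add: card_cartesian_product)
  finally show ?thesis
    unfolding U_def .
qed

lemma card_factors_pow2_le:
  fixes W :: "'a::linorder list"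
  assumes "\<not> n_divisible n W" "n \<ge> 2" "(n - 1) * (n - 1) \<le> 2 ^ j" "k \<le> j"
  shows "card (factors W (2 ^ k)) \<le> card (factors W 1) * 2 ^ (2 * j * k)"
  using assms(4)
proof (induction k)
  case (Suc k)
  have "card (factors W (2 ^ Suc k)) \<le> 2 ^ k * ((n - 1) * (n - 1)) * (2 * card (factors W (2 ^ k)))"
    using card_factors_double_le[OF assms(1,2), of "2 ^ k"] by (simp add: mult.assoc)
  also have "\<dots> = 2 ^ Suc k * ((n - 1) * (n - 1)) * card (factors W (2 ^ k))"
    by simp
  also have "\<dots> \<le> 2 ^ j * 2 ^ j * card (factors W (2 ^ k))"
    using Suc.prems assms(3) by (intro mult_le_mono1 mult_le_mono power_increasing) auto
  also have "\<dots> \<le> 2 ^ j * 2 ^ j * (card (factors W 1) * 2 ^ (2 * j * k))"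
    using Suc by simp
  also have "\<dots> = card (factors W 1) * 2 ^ (j + j + 2 * j * k)"
    by (simp only: power_add ac_simps)
  also have "j + j + 2 * j * k = 2 * j * Suc k"
    by simp
  finally show ?case .
qed simp

text \<open>Positions are pairs (block, offset). The map (colour, rank + block) is injective: in a
  later block of the same colour the rank does not decrease while the block index grows.\<close>

lemma blocks_le_card_by_colour_rank:
  fixes f :: "nat \<times> nat \<Rightarrow> 'a::linorder" and c :: "nat \<times> nat \<Rightarrow> nat" and M n :: nat
  defines "D \<equiv> {..<M} \<times> {..<n}"
  assumes F: "finite F" and "n \<ge> 1"
    and f_in: "\<And>x. x \<in> D \<Longrightarrow> f x \<in> F" and c_range: "\<And>x. c x \<in> {1..<n}"
    and across: "\<And>x y. x \<in> D \<Longrightarrow> y \<in> D \<Longrightarrow> fst x < fst y \<Longrightarrow> c x = c y \<Longrightarrow> f x \<le> f y"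
    and within: "\<And>x y. x \<in> D \<Longrightarrow> y \<in> D \<Longrightarrow> fst x = fst y \<Longrightarrow> f x = f y \<Longrightarrow> x = y"
  shows "M \<le> (n - 1) * card F"
proof -
  define \<phi> where "\<phi> x = (c x, rank_in F (f x) + fst x)" for x
  have not_earlier: "\<not> fst x < fst y" if "x \<in> D" "y \<in> D" "\<phi> x = \<phi> y" for x y
  proof
    assume "fst x < fst y"
    moreover have "c x = c y"
      using that(3) by (simp add: \<phi>_def)
    ultimately have "rank_in F (f x) \<le> rank_in F (f y)"
      using across[OF that(1,2)] by (intro rank_in_mono F) auto
    with \<open>fst x < fst y\<close> that(3) show False
      by (simp add: \<phi>_def)
  qed
  have "inj_on \<phi> D"
  proof (rule inj_onI)
    fix x y assume xy: "x \<in> D" "y \<in> D" "\<phi> x = \<phi> y"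
    then have "fst x = fst y"
      using not_earlier[OF xy] not_earlier[OF xy(2,1) xy(3)[symmetric]] by simp
    moreover from this have "f x = f y"
      using xy(3) rank_in_inj[OF F f_in[OF xy(1)] f_in[OF xy(2)]] by (simp add: \<phi>_def)
    ultimately show "x = y"
      using within xy(1,2) by blast
  qed
  have "\<phi> x \<in> {1..<n} \<times> {..<card F + M}" if "x \<in> D" for x
  proof -
    have "rank_in F (f x) < card F" "fst x < M"
      using rank_in_less_card[OF F f_in[OF that]] that by (auto simp: D_def)
    then show ?thesis
      using c_range by (simp add: \<phi>_def)
  qed
  then have "\<phi> ` D \<subseteq> {1..<n} \<times> {..<card F + M}"
    by blast
  have "M * n = card D"
    by (simp add: D_def card_cartesian_product)
  also have "\<dots> = card (\<phi> ` D)"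
    using \<open>inj_on \<phi> D\<close> by (rule card_image[symmetric])
  also have "\<dots> \<le> card ({1..<n} \<times> {..<card F + M})"
    using \<open>\<phi> ` D \<subseteq> _\<close> by (rule card_mono[rotated]) simp
  also have "\<dots> = (n - 1) * card F + (n - 1) * M"
    by (simp add: card_cartesian_product distrib_left)
  finally have "M * n \<le> (n - 1) * card F + (n - 1) * M" .
  moreover have "M * n = (n - 1) * M + M"
    using \<open>n \<ge> 1\<close> by (cases n) simp_all
  ultimately show ?thesis
    by linarith
qed

lemma block_start_gap:
  fixes G n :: nat
  assumes "r < n" "s < s'"
  shows "s * (G + n) + r + G \<le> s' * (G + n)"
proof -
  have "s * (G + n) + r + G < Suc s * (G + n)"
    using assms(1) by simp
  also have "\<dots> \<le> s' * (G + n)"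
    using assms(2) by (intro mult_le_mono1) simp
  finally show ?thesis
    by simp
qed

lemma blocks_le_factor_count:
  fixes W :: "'a::linorder list"
  assumes nd: "\<not> n_divisible n W"
    and no_power: "\<not> (\<exists>u. u \<noteq> [] \<and> sublist (concat (replicate d u)) W)"
    and n: "n \<ge> 2" and G: "G \<ge> 1" and Gd: "(d - 1) * (n - 1) \<le> G"
    and long: "M * (G + n) + G \<le> length W"
  shows "M \<le> (n - 1) * card (factors W G)"
proof -
  define D where "D = {..<M} \<times> {..<n}"
  define pos where "pos x = fst x * (G + n) + snd x" for x :: "nat \<times> nat"
  define R where "R i j \<longleftrightarrow> (\<exists>x\<in>D. \<exists>y\<in>D. i = pos x \<and> j = pos y \<and> fst x < fst y)" for i j
  have in_range: "pos x + G \<le> length W" if "x \<in> D" for x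
    using block_start_gap[of "snd x" n "fst x" M G] that long by (auto simp: D_def pos_def)
  have "i + G \<le> j \<and> j + G \<le> length W" if "R i j" for i j
  proof -
    obtain x y where "x \<in> D" "y \<in> D" "i = pos x" "j = pos y" "fst x < fst y"
      using \<open>R i j\<close> unfolding R_def by blast
    then show ?thesis
      using block_start_gap[of "snd x" n "fst x" "fst y" G] in_range[of y] by (auto simp: D_def pos_def)
  qed
  from this obtain h where h_range: "\<And>i. h i \<in> {1..<n}"
    and h_mono: "\<And>i j. R i j \<Longrightarrow> h i = h j \<Longrightarrow> factor_at W i G \<le> factor_at W j G"
    using factor_colouring[OF nd n G] by blast
  have distinct_in_block: "factor_at W (pos x) G \<noteq> factor_at W (pos y) G"
    if "y \<in> D" "fst x = fst y" "snd x < snd y" for x y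
  proof
    define p where "p = snd y - snd x"
    assume "factor_at W (pos x) G = factor_at W (pos y) G"
    moreover have "pos y = pos x + p"
      using that(2,3) by (simp add: pos_def p_def)
    moreover have "p \<le> n - 1"
      using that(1) by (auto simp: D_def p_def)
    then have "(d - 1) * p \<le> (d - 1) * (n - 1)"
      by (rule mult_le_mono2)
    then have "(d - 1) * p \<le> G"
      using Gd by (rule order.trans)
    moreover have "0 < p"
      using that(3) by (simp add: p_def)
    ultimately show False
      using sublist_power_if_factor_at_shift_eq[of p "pos x" W d G] no_power in_range[OF that(1)]
      by simp
  qed
  show ?thesis
  proof (rule blocks_le_card_by_colour_rank[where f = "\<lambda>x. factor_at W (pos x) G" and c = "\<lambda>x. h (pos x)"])
    show "factor_at W (pos x) G \<in> factors W G" if "x \<in> {..<M} \<times> {..<n}" for x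
      using in_range that by (intro factor_at_in_factors) (simp add: D_def)
    show "factor_at W (pos x) G \<le> factor_at W (pos y) G"
      if "x \<in> {..<M} \<times> {..<n}" "y \<in> {..<M} \<times> {..<n}" "fst x < fst y" "h (pos x) = h (pos y)" for x y
      using that h_mono[of "pos x" "pos y"] unfolding R_def D_def by blast
    show "x = y"
      if "x \<in> {..<M} \<times> {..<n}" "y \<in> {..<M} \<times> {..<n}" "fst x = fst y"
        "factor_at W (pos x) G = factor_at W (pos y) G" for x y
      using that distinct_in_block[of y x] distinct_in_block[of x y]
      by (cases "snd x" "snd y" rule: linorder_cases) (auto simp: D_def prod_eq_iff)
  qed (use n h_range finite_factors in auto)
qed

lemma length_lt_two_pow_bound:
  fixes W :: "'a::linorder list"
  assumes "\<not> n_divisible n W" "\<not> (\<exists>u. u \<noteq> [] \<and> sublist (concat (replicate d u)) W)"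
    and n: "n \<ge> 2" "n \<le> d" and nd: "n * d \<le> 2 ^ Suc m"
    and A: "set W \<subseteq> A" "finite A" "A \<noteq> {}"
  shows "length W < card A * 2 ^ (m * (2 * m + 10) + 8)"
proof -
  define j where "j = Suc m"
  define G :: nat where "G = 2 ^ j"
  define X where "X = card A * 2 ^ (2 * j * j)"
  have "n \<le> n * d" "(n - 1) * (n - 1) \<le> n * d" "(n - 1) * (d - 1) \<le> n * d"
    using n by (auto intro: mult_le_mono)
  moreover have "n * d \<le> G"
    using nd by (simp add: G_def j_def)
  ultimately have "n \<le> G" "(n - 1) * (n - 1) \<le> 2 ^ j" "(d - 1) * (n - 1) \<le> G"
    unfolding G_def by (simp_all only: mult.commute[of "d - 1"])
  have "1 \<le> X"
    using A by (simp add: X_def card_gt_0_iff Suc_le_eq)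
  have "card (factors W G) \<le> X"
    using card_factors_pow2_le[OF assms(1) n(1) \<open>(n - 1) * (n - 1) \<le> 2 ^ j\<close> order_refl]
      card_factors_one_le[OF A(1,2)]
    unfolding G_def X_def by (meson le_trans mult_le_mono1)
  have "\<not> ((n - 1) * card (factors W G) + 1) * (G + n) + G \<le> length W"
  proof
    assume "((n - 1) * card (factors W G) + 1) * (G + n) + G \<le> length W"
    from blocks_le_factor_count[OF assms(1,2) n(1) _ \<open>(d - 1) * (n - 1) \<le> G\<close> this]
    show False
      by (simp add: G_def)
  qed
  then have "length W < ((n - 1) * card (factors W G) + 1) * (G + n) + G"
    by simp
  also have "\<dots> \<le> (G * X + X) * (2 * G) + G"
    using \<open>n \<le> G\<close> \<open>card (factors W G) \<le> X\<close> \<open>1 \<le> X\<close> by (intro add_mono mult_le_mono) auto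
  also have "\<dots> \<le> (G * X + G * X) * (2 * G) + G * G * X"
    using \<open>1 \<le> X\<close> by (intro add_mono mult_le_mono1) (simp_all add: G_def)
  also have "\<dots> \<le> 8 * (G * G) * X"
    by (simp add: algebra_simps)
  also have "\<dots> = card A * 2 ^ (2 * j * j + j + j + 3)"
    by (simp only: G_def X_def power_add) simp
  also have "\<dots> \<le> card A * 2 ^ (m * (2 * m + 10) + 8)"
    by (intro mult_le_mono2 power_increasing) (simp_all add: j_def algebra_simps)
  finally show ?thesis .
qed

lemma two_pow_le_powr_log:
  fixes x :: real
  assumes "2 ^ m \<le> x"
  shows "2 ^ (m * (2 * m + 10)) \<le> x powr (2 * log 2 x + 10)"
proof -
  have "0 < x"
    using assms by (metis less_le_trans zero_less_numeral zero_less_power)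
  then have "real m \<le> log 2 x"
    using assms by (simp add: le_log_iff powr_realpow)
  then have exponent: "real (m * (2 * m + 10)) \<le> log 2 x * (2 * log 2 x + 10)"
    unfolding of_nat_mult by (intro mult_mono) auto
  have "(2::real) ^ (m * (2 * m + 10)) = 2 powr real (m * (2 * m + 10))"
    using powr_realpow[of 2 "m * (2 * m + 10)"] by simp
  also have "\<dots> \<le> 2 powr (log 2 x * (2 * log 2 x + 10))"
    using exponent by (intro powr_mono) auto
  also have "\<dots> = x powr (2 * log 2 x + 10)"
    using \<open>0 < x\<close> by (simp add: powr_powr[symmetric])
  finally show ?thesis .
qed

lemma length_lt_powr_log_bound:
  fixes W :: "'a::linorder list"
  assumes "\<not> n_divisible n W" "\<not> (\<exists>u. u \<noteq> [] \<and> sublist (concat (replicate d u)) W)"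
    and "n \<ge> 2" "n \<le> d" "set W \<subseteq> A" "finite A" "A \<noteq> {}"
  shows "real (length W)
    < 256 * real (card A) * (real (n * d)) powr (2 * log 2 (real (n * d)) + 10) * (real d)^2"
proof -
  obtain m where m: "2 ^ m \<le> n * d" "n * d < 2 ^ Suc m"
    using ex_power_ivl1[of 2 "n * d"] assms(3,4) by auto
  have "(2::real) ^ m \<le> real (n * d)"
    using m(1) by (metis of_nat_le_iff of_nat_numeral of_nat_power)
  have "real (length W) < real (card A * 2 ^ (m * (2 * m + 10) + 8))"
    using length_lt_two_pow_bound[OF assms(1-4) less_imp_le[OF m(2)] assms(5-7)]
    by (simp only: of_nat_less_iff)
  also have "\<dots> = 256 * real (card A) * 2 ^ (m * (2 * m + 10)) * 1"
    by (simp add: power_add)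
  also have "\<dots> \<le> 256 * real (card A) * (real (n * d)) powr (2 * log 2 (real (n * d)) + 10) * (real d)^2"
    using two_pow_le_powr_log[OF \<open>2 ^ m \<le> real (n * d)\<close>] assms(3,4)
    by (intro mult_mono mult_left_mono) auto
  finally show ?thesis .
qed

theorem theoremt2:
  fixes A :: "'a::linorder set" and l n d :: nat and W :: "'a list"
  assumes "l \<ge> 1" and "n \<ge> 1" and "d \<ge> n"
    and "finite A" and "card A = l"
    and "set W \<subseteq> A"
    and "real (length W) \<ge> 256 * real l * (real (n * d)) powr (2 * log 2 (real (n * d)) + 10) * (real d)^2"
  shows "(\<exists>u. u \<noteq> [] \<and> sublist (concat (replicate d u)) W) \<or> n_divisible n W"
proof (cases "n = 1")
  case True
  have "0 < 256 * real l * (real (n * d)) powr (2 * log 2 (real (n * d)) + 10) * (real d)^2"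
    using assms(1-3) by simp
  then have "W \<noteq> []"
    using assms(7) by auto
  then show ?thesis
    using True n_divisible_one by auto
next
  case False
  show ?thesis
  proof (rule ccontr)
    assume "\<not> ?thesis"
    moreover have "n \<ge> 2" "A \<noteq> {}"
      using assms(1,2,5) False by auto
    ultimately have "real (length W)
        < 256 * real (card A) * (real (n * d)) powr (2 * log 2 (real (n * d)) + 10) * (real d)^2"
      using length_lt_powr_log_bound assms(3,4,6) by blast
    with assms(5,7) show False
      by simp
  qed
qed

end
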